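(* Fix $\rho\in(0,1)$. For each $n$ let $X=(X_1,\dots,X_n)'$ be jointly normal with $E[X_i]=0$, $E[X_i^2]=1$ and $\operatorname{Corr}(X_i,X_j)=\rho$ for $i\neq j$, and let $M_n(|X|)=\max_{1\le i\le n}|X_i|$. Let $\widehat\rho=\widehat\rho_n$ be an estimator (a measurable function of $X$ with values in $[0,1)$) satisfying $$\sqrt{2\ln n}\,\left(\sqrt{1-\rho}-\sqrt{1-\widehat\rho}\right)\xrightarrow[n\to\infty]{P}0 .$$ Then $$\left|\int_{-\infty}^{\infty}\Big(\Psi^n_{\sqrt{\rho}z,\sqrt{1-\rho}}\big(M_n(|X|)\big)-\Psi^n_{\sqrt{\widehat\rho}z,\sqrt{1-\widehat\rho}}\big(M_n(|X|)\big)\Big)\phi(z)\,dz\right|\xrightarrow[n\to\infty]{P}0.$$ Consequently $p_0(\rho)-p_0(\widehat\rho)\xrightarrow{P}0$, where $p_0(r)=1-\int_{-\infty}^{\infty}\Psi^n_{\sqrt{r}z,\sqrt{1-r}}\big(M_n(|X|)\big)\phi(z)\,dz$ for $r\in[0,1)$.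
   Context: $\Psi_{\mu,\sigma}$ denotes the cumulative distribution function of the folded normal distribution: $\Psi_{\mu,\sigma}(x)=P(|Y|\le x)$ where $Y\sim N(\mu,\sigma^2)$; $\Psi^n$ denotes its $n$-th power. $\phi$ is the standard normal density. The correlation $\rho$ does not depend on $n$. *)

theory Defs
  imports "HOL-Probability.Probability"
begin

definition conv_in_prob_zero :: "'a measure \<Rightarrow> (nat \<Rightarrow> 'a \<Rightarrow> real) \<Rightarrow> bool" where
  "conv_in_prob_zero M Y \<longleftrightarrow>
     (\<forall>e>0. (\<lambda>n. measure M {\<omega> \<in> space M. \<bar>Y n \<omega>\<bar> > e}) \<longlonglongrightarrow> 0)"

definition gaussian_rv :: "'a measure \<Rightarrow> ('a \<Rightarrow> real) \<Rightarrow> real \<Rightarrow> real \<Rightarrow> bool" where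
  "gaussian_rv M Y mu v \<longleftrightarrow> Y \<in> borel_measurable M \<and>
     ((v > 0 \<and> distributed M lborel Y (normal_density mu (sqrt v))) \<or>
      (v = 0 \<and> (AE \<omega> in M. Y \<omega> = mu)))"

definition equicorr_gaussian ::
  "'a measure \<Rightarrow> nat \<Rightarrow> real \<Rightarrow> ('a \<Rightarrow> nat \<Rightarrow> real) \<Rightarrow> bool" where
  "equicorr_gaussian M n rho X \<longleftrightarrow>
     (\<forall>i\<in>{1..n}. (\<lambda>\<omega>. X \<omega> i) \<in> borel_measurable M) \<and>
     (\<forall>c :: nat \<Rightarrow> real. gaussian_rv M (\<lambda>\<omega>. \<Sum>i=1..n. c i * X \<omega> i) 0
        (\<Sum>i=1..n. \<Sum>j=1..n. c i * c j * (if i = j then 1 else rho)))"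

definition folded_normal_cdf :: "real \<Rightarrow> real \<Rightarrow> real \<Rightarrow> real" where
  "folded_normal_cdf mu s x =
     measure (density lborel (normal_density mu s)) {y. \<bar>y\<bar> \<le> x}"

definition max_abs :: "nat \<Rightarrow> (nat \<Rightarrow> real) \<Rightarrow> real" where
  "max_abs n x = Max ((\<lambda>i. \<bar>x i\<bar>) ` {1..n})"

definition mix_integral :: "nat \<Rightarrow> real \<Rightarrow> real \<Rightarrow> real" where
  "mix_integral n r m =
     (\<integral>z. (folded_normal_cdf (sqrt r * z) (sqrt (1 - r)) m) ^ n * std_normal_density z \<partial>lborel)"

definition p0 :: "nat \<Rightarrow> real \<Rightarrow> real \<Rightarrow> real" where
  "p0 n r m = 1 - mix_integral n r m"

end

(*
  Write X_i = sqrt rho Z + sqrt (1 - rho) Y_i with Z, Y_1, ..., Y_n independent standard normal;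
  then the integral in the statement is P(max_i |sqrt rho Z + sqrt (1 - rho) Y_i| <= m). The
  difference of the two integrals is bounded deterministically, uniformly in the level m, so the
  law of X enters only through measurability.

  Replacing (sqrt rho, sqrt (1 - rho)) by (sqrt r, sqrt (1 - r)) moves every |a Z + s Y_i| by at
  most d = |sqrt r - sqrt rho| K + |sqrt (1 - r) - sqrt (1 - rho)| T on the event |Z| <= K,
  |Y_i| <= T. With T = 2 sqrt (2 ln n) the union bound over the n coordinates costs O(1/n), and the
  hypothesis makes sqrt (2 ln n) |sqrt (1 - r) - sqrt (1 - rho)|, hence d, small in probability.
  Finally, raising the level from m to m + d changes the probability by at most d / sqrt rho: each
  one-sided event is a translate by d / sqrt rho in Z, and translating a standard normal by h
  changes the mean of a [0,1]-valued function by at most h / 2.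
*)
theory Submission
  imports Defs
begin

section \<open>Elementary inequalities\<close>

lemma power_increment_mono:
  fixes t t' d :: real
  assumes "0 \<le> t" "t \<le> t'" "0 \<le> d"
  shows "(t + d) ^ n - t ^ n \<le> (t' + d) ^ n - t' ^ n"
proof -
  have "0 \<le> (t + d) ^ n - t ^ n \<and> (t + d) ^ n - t ^ n \<le> (t' + d) ^ n - t' ^ n"
  proof (induction n)
    case (Suc n)
    have step: "(u + d) ^ Suc n - u ^ Suc n = (u + d) * ((u + d) ^ n - u ^ n) + d * u ^ n" for u
      by (simp add: algebra_simps)
    have "(t + d) * ((t + d) ^ n - t ^ n) \<le> (t' + d) * ((t' + d) ^ n - t' ^ n)"
      using Suc assms by (intro mult_mono) auto
    moreover have "d * t ^ n \<le> d * t' ^ n"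
      using assms by (intro mult_left_mono power_mono) auto
    ultimately show ?case
      unfolding step using Suc assms by simp
  qed simp
  then show ?thesis ..
qed

lemma power_le_add_mult:
  fixes x y u :: real
  assumes "0 \<le> x" "0 \<le> y" "y \<le> 1" "0 \<le> u" "y \<le> x + u"
  shows "y ^ n \<le> x ^ n + real n * u"
proof (cases "y \<le> x")
  case True
  with assms have "y ^ n \<le> x ^ n"
    by (intro power_mono) auto
  with assms show ?thesis
    by (simp add: add_increasing2)
next
  case False
  \<comment> \<open>Convexity moves the increment to the right end of \<open>[0, 1]\<close>, where Bernoulli's
    inequality bounds it.\<close>
  have "y ^ n - x ^ n \<le> 1 ^ n - (1 + (x - y)) ^ n"
    using power_increment_mono[of x "1 + (x - y)" "y - x" n] assms False by simp
  also have "\<dots> \<le> real n * (y - x)"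
    using Bernoulli_inequality[of "x - y" n] assms False by (simp add: algebra_simps)
  also have "\<dots> \<le> real n * u"
    using assms by (intro mult_left_mono) auto
  finally show ?thesis
    by simp
qed

lemma power_pos_part_diff_le:
  fixes x y c :: real
  assumes "0 \<le> c" "0 \<le> x" "x \<le> y"
  shows "(max 0 (y - c)) ^ n - (max 0 (x - c)) ^ n \<le> y ^ n - x ^ n"
proof -
  consider "y \<le> c" | "x \<le> c" "c < y" | "c < x"
    by linarith
  then show ?thesis
  proof cases
    case 1
    with assms show ?thesis
      by (simp add: power_mono)
  next
    case 2
    have "(0 + (y - c)) ^ n - 0 ^ n \<le> (c + (y - c)) ^ n - c ^ n"
      using 2 assms by (intro power_increment_mono) auto
    moreover have "x ^ n \<le> c ^ n"
      using 2 assms by (intro power_mono) auto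
    ultimately show ?thesis
      using 2 by simp
  next
    case 3
    have "(x - c + (y - x)) ^ n - (x - c) ^ n \<le> (x + (y - x)) ^ n - x ^ n"
      using 3 assms by (intro power_increment_mono) auto
    with 3 assms show ?thesis
      by simp
  qed
qed

lemma power_pos_part_sum_diff_le:
  fixes A A' B B' :: real
  assumes "0 \<le> A" "A \<le> A'" "A' \<le> 1" "0 \<le> B" "B \<le> B'" "B' \<le> 1"
  shows "(max 0 (A' + B' - 1)) ^ n - (max 0 (A + B - 1)) ^ n \<le> (A' ^ n - A ^ n) + (B' ^ n - B ^ n)"
proof -
  have "(max 0 (A' - (1 - B'))) ^ n - (max 0 (A - (1 - B'))) ^ n \<le> A' ^ n - A ^ n"
    using assms by (intro power_pos_part_diff_le) auto
  moreover have "(max 0 (B' - (1 - A))) ^ n - (max 0 (B - (1 - A))) ^ n \<le> B' ^ n - B ^ n"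
    using assms by (intro power_pos_part_diff_le) auto
  ultimately show ?thesis
    by (simp add: algebra_simps)
qed

lemma sqrt_diff_le_sqrt_one_minus_diff:
  assumes "0 < \<rho>" "\<rho> \<le> 1" "0 \<le> r" "r \<le> 1"
  shows "\<bar>sqrt r - sqrt \<rho>\<bar> \<le> 2 * \<bar>sqrt (1 - r) - sqrt (1 - \<rho>)\<bar> / sqrt \<rho>"
proof -
  \<comment> \<open>Both differences are \<open>\<bar>r - \<rho>\<bar>\<close> divided by the corresponding sum of square roots.\<close>
  have "(sqrt r - sqrt \<rho>) * (sqrt r + sqrt \<rho>) = r - \<rho>"
    "(sqrt (1 - r) - sqrt (1 - \<rho>)) * (sqrt (1 - r) + sqrt (1 - \<rho>)) = \<rho> - r"
    using assms by (simp_all add: algebra_simps)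
  then have sum_r: "\<bar>sqrt r - sqrt \<rho>\<bar> * (sqrt r + sqrt \<rho>) = \<bar>r - \<rho>\<bar>"
    and sum_1r: "\<bar>sqrt (1 - r) - sqrt (1 - \<rho>)\<bar> * (sqrt (1 - r) + sqrt (1 - \<rho>)) = \<bar>\<rho> - r\<bar>"
    using assms by (subst abs_mult_pos; simp)+
  have "sqrt (1 - r) \<le> 1" "sqrt (1 - \<rho>) \<le> 1"
    using assms by simp_all
  then have "sqrt (1 - r) + sqrt (1 - \<rho>) \<le> 2"
    by linarith
  have "\<bar>sqrt r - sqrt \<rho>\<bar> * sqrt \<rho> \<le> \<bar>sqrt r - sqrt \<rho>\<bar> * (sqrt r + sqrt \<rho>)"
    using assms by (intro mult_left_mono) auto
  also have "\<dots> = \<bar>sqrt (1 - r) - sqrt (1 - \<rho>)\<bar> * (sqrt (1 - r) + sqrt (1 - \<rho>))"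
    unfolding sum_r sum_1r by (rule abs_minus_commute)
  also have "\<dots> \<le> \<bar>sqrt (1 - r) - sqrt (1 - \<rho>)\<bar> * 2"
    using \<open>sqrt (1 - r) + sqrt (1 - \<rho>) \<le> 2\<close> by (intro mult_left_mono) auto
  finally show ?thesis
    using assms by (simp add: field_simps)
qed

section \<open>The standard normal distribution\<close>

definition std_normal :: "real measure" where
  "std_normal = density lborel std_normal_density"

interpretation std_normal: prob_space std_normal
  unfolding std_normal_def by (rule prob_space_normal_density) simp

lemma space_std_normal [simp]: "space std_normal = UNIV"
  by (simp add: std_normal_def)

lemma sets_std_normal [simp, measurable_cong]: "sets std_normal = sets borel"
  by (simp add: std_normal_def)

lemma integral_std_normal:
  "f \<in> borel_measurable borel \<Longrightarrow>
     integral\<^sup>L std_normal f = (\<integral>x. std_normal_density x * f x \<partial>lborel)"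
  unfolding std_normal_def by (subst integral_density) auto

lemma measure_std_normal:
  "A \<in> sets borel \<Longrightarrow> measure std_normal A = (\<integral>x. std_normal_density x * indicator A x \<partial>lborel)"
  by (subst integral_std_normal[symmetric]) auto

lemma borel_measurable_measure_std_normal:
  assumes "Measurable.pred (borel \<Otimes>\<^sub>M borel) (\<lambda>p. P (fst p) (snd p))"
  shows "(\<lambda>z. measure std_normal {x. P z x}) \<in> borel_measurable borel"
  using assms
  by (intro std_normal.measurable_measure)
     (auto simp: pred_def space_pair_measure sets_pair_measure_cong[OF refl sets_std_normal])

lemma integrable_std_normal_bounded:
  fixes f :: "real \<Rightarrow> real"
  shows "f \<in> borel_measurable borel \<Longrightarrow> (\<And>x. \<bar>f x\<bar> \<le> B) \<Longrightarrow> integrable std_normal f"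
  by (intro std_normal.integrable_const_bound[where B = B]) auto

lemma folded_normal_cdf_eq_std_normal:
  assumes "0 < \<sigma>"
  shows "folded_normal_cdf \<mu> \<sigma> m = measure std_normal {x. \<bar>\<mu> + \<sigma> * x\<bar> \<le> m}"
proof -
  have "distributed std_normal lborel (\<lambda>x. x) std_normal_density"
    by (simp add: distributed_def distr_id2 std_normal_def)
  from std_normal.normal_density_affine[OF this, of \<sigma> \<mu>] assms
  have "distributed std_normal lborel (\<lambda>x. \<mu> + \<sigma> * x) (normal_density \<mu> \<sigma>)"
    by simp
  then have "density lborel (normal_density \<mu> \<sigma>) = distr std_normal lborel (\<lambda>x. \<mu> + \<sigma> * x)"
    by (simp add: distributed_distr_eq_density)
  then show ?thesis
    by (simp add: folded_normal_cdf_def measure_distr)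
qed

lemma std_normal_density_le_iff:
  "std_normal_density x \<le> std_normal_density y \<longleftrightarrow> \<bar>y\<bar> \<le> \<bar>x\<bar>"
  by (simp add: std_normal_density_def abs_le_square_iff divide_le_cancel)

lemma std_normal_density_le_half: "std_normal_density x \<le> 1 / 2"
proof -
  have "std_normal_density x \<le> std_normal_density 0"
    by (simp add: std_normal_density_le_iff)
  also have "\<dots> \<le> 1 / 2"
    using pi_gt3 by (simp add: std_normal_density_def real_le_rsqrt)
  finally show ?thesis .
qed

lemma std_normal_density_le_shifted:
  assumes "0 \<le> t * (x - t)"
  shows "std_normal_density x \<le> exp (- t\<^sup>2 / 2) * normal_density t 1 x"
proof -
  from assms have "- x\<^sup>2 / 2 \<le> - t\<^sup>2 / 2 + - (x - t)\<^sup>2 / 2"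
    by (simp add: power2_eq_square algebra_simps)
  then have "exp (- x\<^sup>2 / 2) \<le> exp (- t\<^sup>2 / 2) * exp (- (x - t)\<^sup>2 / 2)"
    by (simp add: exp_add[symmetric])
  then show ?thesis
    by (simp add: normal_density_def divide_right_mono)
qed

lemma std_normal_density_le_two_shifted:
  assumes "0 \<le> T" "T < \<bar>x\<bar>"
  shows "std_normal_density x \<le> exp (- T\<^sup>2 / 2) * (normal_density T 1 x + normal_density (- T) 1 x)"
proof (cases "0 < x")
  case True
  with assms have "std_normal_density x \<le> exp (- T\<^sup>2 / 2) * normal_density T 1 x"
    by (intro std_normal_density_le_shifted) simp
  moreover have "0 \<le> exp (- T\<^sup>2 / 2) * normal_density (- T) 1 x"
    by simp
  ultimately show ?thesis
    unfolding distrib_left by linarith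
next
  case False
  with assms have "std_normal_density x \<le> exp (- T\<^sup>2 / 2) * normal_density (- T) 1 x"
    using std_normal_density_le_shifted[of "- T" x] mult_nonneg_nonpos[of T "x + T"] by simp
  moreover have "0 \<le> exp (- T\<^sup>2 / 2) * normal_density T 1 x"
    by simp
  ultimately show ?thesis
    unfolding distrib_left by linarith
qed

lemma std_normal_tail_le:
  assumes "0 \<le> T"
  shows "measure std_normal {x. T < \<bar>x\<bar>} \<le> 2 * exp (- T\<^sup>2 / 2)"
proof -
  have "{x. T < \<bar>x\<bar>} \<in> sets borel"
    by (intro borel_open open_Collect_less continuous_intros)
  then have "measure std_normal {x. T < \<bar>x\<bar>}
      = (\<integral>x. std_normal_density x * indicator {x. T < \<bar>x\<bar>} x \<partial>lborel)"
    by (rule measure_std_normal)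
  also have "\<dots> \<le> (\<integral>x. exp (- T\<^sup>2 / 2) * (normal_density T 1 x + normal_density (- T) 1 x) \<partial>lborel)"
    using std_normal_density_le_two_shifted[OF assms]
    by (intro integral_mono') (auto simp: indicator_def)
  also have "\<dots> = 2 * exp (- T\<^sup>2 / 2)"
    by simp
  finally show ?thesis .
qed

lemma std_normal_tail_sqrt_log_le:
  assumes "2 \<le> n"
  shows "real n * measure std_normal {x. 2 * sqrt (2 * ln (real n)) < \<bar>x\<bar>} \<le> 2 / real n"
proof -
  define T where "T = 2 * sqrt (2 * ln (real n))"
  have "0 \<le> ln (real n)"
    using assms by simp
  then have "0 \<le> T" and "- T\<^sup>2 / 2 = - (4 * ln (real n))"
    by (simp_all add: T_def power_mult_distrib)
  moreover have "exp (4 * ln (real n)) = real n ^ 4"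
    using exp_of_nat_mult[of 4 "ln (real n)"] assms by simp
  ultimately have "measure std_normal {x. T < \<bar>x\<bar>} \<le> 2 * inverse (real n ^ 4)"
    using std_normal_tail_le[of T] by (simp only: exp_minus)
  then have "real n * measure std_normal {x. T < \<bar>x\<bar>} \<le> real n * (2 * inverse (real n ^ 4))"
    by (rule mult_left_mono) simp
  also have "\<dots> = 2 / real n ^ 3"
    using assms by (simp add: field_simps eval_nat_numeral)
  also have "\<dots> \<le> 2 / real n"
    using assms power_increasing[of 1 3 "real n"] by (intro divide_left_mono) auto
  finally show ?thesis
    by (simp add: T_def)
qed

lemma std_normal_tail_le_quarter:
  assumes "0 < \<eta>"
  shows "measure std_normal {x. 4 / sqrt \<eta> < \<bar>x\<bar>} \<le> \<eta> / 4"
proof -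
  have "8 / \<eta> \<le> exp (8 / \<eta>)"
    using exp_ge_add_one_self[of "8 / \<eta>"] by linarith
  then have "2 * exp (- (8 / \<eta>)) \<le> \<eta> / 4"
    using assms by (simp add: exp_minus field_simps)
  with std_normal_tail_le[of "4 / sqrt \<eta>"] assms show ?thesis
    by (simp add: power_divide)
qed

lemma measure_std_normal_lessThan_diff_le:
  assumes "a \<le> b"
  shows "measure std_normal {..<b} - measure std_normal {..<a} \<le> (b - a) / 2"
proof -
  have "measure std_normal {..<b} - measure std_normal {..<a} = measure std_normal {a..<b}"
    using assms by (subst std_normal.finite_measure_Diff[symmetric])
      (auto intro!: arg_cong[where f = "measure std_normal"])
  also have "\<dots> = (\<integral>x. std_normal_density x * indicator {a..<b} x \<partial>lborel)"
    by (rule measure_std_normal) simp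
  also have "\<dots> \<le> (\<integral>x. 1 / 2 * indicator {a..<b} x \<partial>lborel)"
  proof (rule integral_mono')
    show "integrable lborel (\<lambda>x. 1 / 2 * indicator {a..<b} x :: real)"
      using assms by (intro integrable_mult_right integrable_real_indicator) auto
  qed (use std_normal_density_le_half in \<open>auto simp: indicator_def\<close>)
  also have "\<dots> = (b - a) / 2"
    using assms by simp
  finally show ?thesis .
qed

lemma integrable_std_normal_density_shift_mult:
  fixes f :: "real \<Rightarrow> real"
  assumes [measurable]: "f \<in> borel_measurable borel" and f: "\<And>x. \<bar>f x\<bar> \<le> B"
  shows "integrable lborel (\<lambda>x. std_normal_density (x + h) * f x)"
proof (rule Bochner_Integration.integrable_bound)
  show "integrable lborel (\<lambda>x. std_normal_density (x + h) * B)"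
  proof (rule integrable_mult_left)
    have "std_normal_density (x + h) = normal_density (- h) 1 x" for x
      by (simp add: normal_density_def)
    then show "integrable lborel (\<lambda>x. std_normal_density (x + h))"
      using integrable_normal_density[of 1 "- h"] by simp
  qed
  show "AE x in lborel. norm (std_normal_density (x + h) * f x) \<le> norm (std_normal_density (x + h) * B)"
    using f order_trans[OF f abs_ge_self] by (simp add: abs_mult mult_left_mono)
qed measurable

lemma integral_std_normal_translate_diff:
  fixes f :: "real \<Rightarrow> real"
  assumes [measurable]: "f \<in> borel_measurable borel" and f: "\<And>x. \<bar>f x\<bar> \<le> B"
  shows "(\<integral>z. f (z - h) \<partial>std_normal) - integral\<^sup>L std_normal f
    = (\<integral>x. (std_normal_density (x + h) - std_normal_density x) * f x \<partial>lborel)"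
proof -
  have "(\<integral>z. f (z - h) \<partial>std_normal) = (\<integral>z. std_normal_density z * f (z - h) \<partial>lborel)"
    by (rule integral_std_normal) measurable
  also have "\<dots> = (\<integral>x. std_normal_density (x + h) * f x \<partial>lborel)"
    using lborel_integral_real_affine[of 1 "\<lambda>z. std_normal_density z * f (z - h)" h]
    by (simp add: add.commute)
  finally show ?thesis
    using integrable_std_normal_density_shift_mult[OF _ f, where h = h]
      integrable_std_normal_density_shift_mult[OF _ f, where h = 0]
    by (simp add: integral_std_normal left_diff_distrib)
qed

lemma std_normal_density_shift_diff_mult_le:
  assumes "0 \<le> h" "0 \<le> g" "g \<le> 1"
  shows "(std_normal_density (x + h) - std_normal_density x) * g
    \<le> (std_normal_density (x + h) - std_normal_density x) * indicator {..< - h / 2} x"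
proof (cases "x < - h / 2")
  case True
  with assms have "0 \<le> std_normal_density (x + h) - std_normal_density x"
    by (simp add: std_normal_density_le_iff)
  with True assms show ?thesis
    by (simp add: mult_left_le)
next
  case False
  with assms have "std_normal_density (x + h) - std_normal_density x \<le> 0"
    by (simp add: std_normal_density_le_iff)
  with False assms show ?thesis
    by (simp add: mult_nonpos_nonneg)
qed

lemma integral_std_normal_shift_le:
  fixes G :: "real \<Rightarrow> real"
  assumes [measurable]: "G \<in> borel_measurable borel"
    and G: "\<And>x. 0 \<le> G x" "\<And>x. G x \<le> 1" and "0 \<le> h"
  shows "(\<integral>z. G (z - h) \<partial>std_normal) \<le> integral\<^sup>L std_normal G + h / 2"
proof -
  let ?L = "indicator {..< - h / 2} :: real \<Rightarrow> real"
  let ?\<Delta> = "\<lambda>x. std_normal_density (x + h) - std_normal_density x"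
  have G_abs: "\<bar>G x\<bar> \<le> 1" and L_abs: "\<bar>?L x\<bar> \<le> 1" for x
    using G[of x] by (simp_all add: indicator_def)
  have integrable_\<Delta>: "integrable lborel (\<lambda>x. ?\<Delta> x * f x)"
    if [measurable]: "f \<in> borel_measurable borel" and "\<And>x. \<bar>f x\<bar> \<le> 1" for f :: "real \<Rightarrow> real"
    using integrable_std_normal_density_shift_mult[OF _ that(2), where h = h]
      integrable_std_normal_density_shift_mult[OF _ that(2), where h = 0]
    by (simp add: left_diff_distrib)
  have "(\<integral>z. G (z - h) \<partial>std_normal) - integral\<^sup>L std_normal G = (\<integral>x. ?\<Delta> x * G x \<partial>lborel)"
    by (rule integral_std_normal_translate_diff[OF _ G_abs]) simp
  \<comment> \<open>The translated density exceeds the original exactly left of \<open>-h/2\<close>.\<close>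
  also have "\<dots> \<le> (\<integral>x. ?\<Delta> x * ?L x \<partial>lborel)"
    using G_abs L_abs G \<open>0 \<le> h\<close>
    by (intro integral_mono integrable_\<Delta> std_normal_density_shift_diff_mult_le) auto
  also have "\<dots> = (\<integral>z. ?L (z - h) \<partial>std_normal) - integral\<^sup>L std_normal ?L"
    by (rule integral_std_normal_translate_diff[OF _ L_abs, symmetric]) simp
  also have "(\<lambda>z. ?L (z - h)) = indicator {..< h / 2}"
    by (auto simp: indicator_def)
  also have "integral\<^sup>L std_normal (indicator {..< h / 2}) - integral\<^sup>L std_normal ?L
      = measure std_normal {..< h / 2} - measure std_normal {..< - h / 2}"
    by simp
  also have "\<dots> \<le> h / 2"
    using measure_std_normal_lessThan_diff_le[of "- h / 2" "h / 2"] \<open>0 \<le> h\<close> by simp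
  finally show ?thesis
    by simp
qed

lemma integral_std_normal_reflect:
  fixes G :: "real \<Rightarrow> real"
  assumes [measurable]: "G \<in> borel_measurable borel"
  shows "(\<integral>z. G (- z) \<partial>std_normal) = integral\<^sup>L std_normal G"
proof -
  have "(\<integral>z. G (- z) \<partial>std_normal) = (\<integral>z. std_normal_density z * G (- z) \<partial>lborel)"
    by (rule integral_std_normal) measurable
  also have "\<dots> = (\<integral>x. std_normal_density x * G x \<partial>lborel)"
    using lborel_integral_real_affine[of "- 1" "\<lambda>z. std_normal_density z * G (- z)" 0]
    by (simp add: normal_density_def)
  also have "\<dots> = integral\<^sup>L std_normal G"
    by (rule integral_std_normal[symmetric]) measurable
  finally show ?thesis .
qed

lemma integral_std_normal_translate_le:
  fixes G :: "real \<Rightarrow> real"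
  assumes [measurable]: "G \<in> borel_measurable borel" and G: "\<And>x. 0 \<le> G x" "\<And>x. G x \<le> 1"
  shows "(\<integral>z. G (z + h) \<partial>std_normal) \<le> integral\<^sup>L std_normal G + \<bar>h\<bar> / 2"
proof (cases "0 \<le> h")
  case True
  have "(\<integral>z. G (z + h) \<partial>std_normal) = (\<integral>z. G (- (z - h)) \<partial>std_normal)"
    using integral_std_normal_reflect[of "\<lambda>z. G (z + h)"] by simp
  also have "\<dots> \<le> (\<integral>z. G (- z) \<partial>std_normal) + h / 2"
    using True G by (intro integral_std_normal_shift_le[of "\<lambda>z. G (- z)"]) auto
  also have "(\<integral>z. G (- z) \<partial>std_normal) = integral\<^sup>L std_normal G"
    by (rule integral_std_normal_reflect) measurable
  finally show ?thesis
    using True by simp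
next
  case False
  then show ?thesis
    using integral_std_normal_shift_le[OF assms, of "- h"] by simp
qed

section \<open>The distribution of the maximum\<close>

text \<open>\<open>max_abs_cdf n a s m\<close> is \<open>P(max\<^sub>i \<bar>a Z + s Y\<^sub>i\<bar> \<le> m)\<close> for independent standard
  normal \<open>Z, Y\<^sub>1, \<dots>, Y\<^sub>n\<close>, computed by conditioning on \<open>Z\<close>.\<close>
definition max_abs_cdf :: "nat \<Rightarrow> real \<Rightarrow> real \<Rightarrow> real \<Rightarrow> real" where
  "max_abs_cdf n a s m = (\<integral>z. (measure std_normal {x. \<bar>a * z + s * x\<bar> \<le> m}) ^ n \<partial>std_normal)"

lemma mix_integral_eq_max_abs_cdf:
  assumes "0 \<le> r" "r < 1"
  shows "mix_integral n r m = max_abs_cdf n (sqrt r) (sqrt (1 - r)) m"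
proof -
  have "(\<lambda>z. (measure std_normal {x. \<bar>sqrt r * z + sqrt (1 - r) * x\<bar> \<le> m}) ^ n)
          \<in> borel_measurable borel"
    by (intro borel_measurable_power borel_measurable_measure_std_normal) measurable
  with assms show ?thesis
    by (simp add: mix_integral_def max_abs_cdf_def folded_normal_cdf_eq_std_normal
        integral_std_normal mult.commute)
qed

lemma (in prob_space) prob_abs_le_eq:
  fixes f :: "'a \<Rightarrow> real"
  assumes [measurable]: "f \<in> borel_measurable M"
  shows "prob {x \<in> space M. \<bar>f x\<bar> \<le> m}
    = max 0 (prob {x \<in> space M. f x \<le> m} + prob {x \<in> space M. - m \<le> f x} - 1)"
proof -
  let ?S = "{x \<in> space M. f x \<le> m}" and ?T = "{x \<in> space M. - m \<le> f x}"
  have inter: "?S \<inter> ?T = {x \<in> space M. \<bar>f x\<bar> \<le> m}"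
    by (auto simp: abs_le_iff)
  show ?thesis
  proof (cases "0 \<le> m")
    case True
    then have "?S \<union> ?T = space M"
      by auto
    then have "1 = prob ?S + prob ?T - prob (?S \<inter> ?T)"
      by (subst measure_Un3[symmetric]) (auto simp: prob_space fmeasurable_eq_sets)
    with inter have "prob {x \<in> space M. \<bar>f x\<bar> \<le> m} = prob ?S + prob ?T - 1"
      by simp
    then show ?thesis
      by (metis measure_nonneg max.absorb2)
  next
    case False
    then have "?S \<inter> ?T = {}"
      by auto
    then have le1: "prob ?S + prob ?T \<le> 1"
      using prob_le_1[of "?S \<union> ?T"] by (subst finite_measure_Union[symmetric]) auto
    from False have empty: "{x \<in> space M. \<bar>f x\<bar> \<le> m} = {}"
      by auto
    show ?thesis
      unfolding empty using le1 by (simp add: max_def)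
  qed
qed

lemma std_normal_abs_affine_power_increment_le:
  assumes "0 < a" "0 \<le> d"
  shows "(measure std_normal {x. \<bar>a * z + s * x\<bar> \<le> m + d}) ^ n
    \<le> (measure std_normal {x. \<bar>a * z + s * x\<bar> \<le> m}) ^ n
      + ((measure std_normal {x. a * (z - d / a) + s * x \<le> m}) ^ n
         - (measure std_normal {x. a * z + s * x \<le> m}) ^ n)
      + ((measure std_normal {x. - m \<le> a * (z + d / a) + s * x}) ^ n
         - (measure std_normal {x. - m \<le> a * z + s * x}) ^ n)"
proof -
  define A where "A m' = measure std_normal {x. a * z + s * x \<le> m'}" for m'
  define B where "B m' = measure std_normal {x. - m' \<le> a * z + s * x}" for m'
  have abs_eq: "measure std_normal {x. \<bar>a * z + s * x\<bar> \<le> m'} = max 0 (A m' + B m' - 1)" for m'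
    using std_normal.prob_abs_le_eq[of "\<lambda>x. a * z + s * x" m'] by (simp add: A_def B_def)
  \<comment> \<open>Raising the level by \<open>d\<close> translates each one-sided event by \<open>d / a\<close> in \<open>z\<close>.\<close>
  have shift: "{x. a * (z - d / a) + s * x \<le> m} = {x. a * z + s * x \<le> m + d}"
    "{x. - m \<le> a * (z + d / a) + s * x} = {x. - (m + d) \<le> a * z + s * x}"
    using \<open>0 < a\<close> by (auto simp: algebra_simps)
  have "A m \<le> A (m + d)" "B m \<le> B (m + d)"
    using \<open>0 \<le> d\<close> unfolding A_def B_def by (auto intro!: std_normal.finite_measure_mono)
  then have "(max 0 (A (m + d) + B (m + d) - 1)) ^ n - (max 0 (A m + B m - 1)) ^ n
      \<le> (A (m + d) ^ n - A m ^ n) + (B (m + d) ^ n - B m ^ n)"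
    by (intro power_pos_part_sum_diff_le) (auto simp: A_def B_def)
  then show ?thesis
    unfolding shift abs_eq A_def[symmetric] B_def[symmetric] by linarith
qed

lemma max_abs_cdf_increment_le:
  assumes "0 < a" "0 \<le> d"
  shows "max_abs_cdf n a s (m + d) \<le> max_abs_cdf n a s m + d / a"
proof -
  define h where "h = d / a"
  define A where "A z = (measure std_normal {x. a * z + s * x \<le> m}) ^ n" for z
  define B where "B z = (measure std_normal {x. - m \<le> a * z + s * x}) ^ n" for z
  define F where "F m' z = (measure std_normal {x. \<bar>a * z + s * x\<bar> \<le> m'}) ^ n" for m' z
  have [measurable]: "A \<in> borel_measurable borel" "B \<in> borel_measurable borel"
    "F m' \<in> borel_measurable borel" for m'
    unfolding A_def[abs_def] B_def[abs_def] F_def[abs_def]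
    by (intro borel_measurable_power borel_measurable_measure_std_normal, measurable)+
  have bounded: "0 \<le> A z" "A z \<le> 1" "0 \<le> B z" "B z \<le> 1" "0 \<le> F m' z" "F m' z \<le> 1" for m' z
    by (simp_all add: A_def B_def F_def power_le_one)
  have integrable: "integrable std_normal f"
    if "f \<in> borel_measurable borel" "\<And>z. 0 \<le> f z" "\<And>z. f z \<le> 1" for f :: "real \<Rightarrow> real"
    using that by (intro integrable_std_normal_bounded[where B = 1]) (auto simp: abs_le_iff)
  have "integral\<^sup>L std_normal (F (m + d))
      \<le> (\<integral>z. F m z + (A (z - h) - A z) + (B (z + h) - B z) \<partial>std_normal)"
    using std_normal_abs_affine_power_increment_le[OF assms] bounded
    by (intro integral_mono Bochner_Integration.integrable_add Bochner_Integration.integrable_diff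
        integrable) (auto simp: A_def B_def F_def h_def)
  also have "\<dots> = integral\<^sup>L std_normal (F m)
      + ((\<integral>z. A (z - h) \<partial>std_normal) - integral\<^sup>L std_normal A)
      + ((\<integral>z. B (z + h) \<partial>std_normal) - integral\<^sup>L std_normal B)"
    using bounded by (simp add: integrable)
  also have "\<dots> \<le> integral\<^sup>L std_normal (F m) + h / 2 + h / 2"
    using integral_std_normal_translate_le[of A "- h"] integral_std_normal_translate_le[of B h]
      bounded assms by (simp add: h_def)
  finally show ?thesis
    by (simp add: max_abs_cdf_def F_def[abs_def] h_def)
qed

lemma measure_std_normal_perturb_le:
  assumes "\<bar>z\<bar> \<le> K" "0 \<le> T" "\<bar>a - a'\<bar> * K + \<bar>s - s'\<bar> * T \<le> d"
  shows "measure std_normal {x. \<bar>a * z + s * x\<bar> \<le> m}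
    \<le> measure std_normal {x. \<bar>a' * z + s' * x\<bar> \<le> m + d} + measure std_normal {x. T < \<bar>x\<bar>}"
proof -
  have "\<bar>a' * z + s' * x\<bar> \<le> m + d" if "\<bar>a * z + s * x\<bar> \<le> m" "\<bar>x\<bar> \<le> T" for x
  proof -
    have "\<bar>a' * z + s' * x\<bar> \<le> \<bar>a * z + s * x\<bar> + \<bar>a - a'\<bar> * \<bar>z\<bar> + \<bar>s - s'\<bar> * \<bar>x\<bar>"
      using abs_triangle_ineq4[of "a * z + s * x" "(a - a') * z + (s - s') * x"]
        abs_triangle_ineq[of "(a - a') * z" "(s - s') * x"]
      by (simp add: abs_mult[symmetric] algebra_simps)
    also have "\<dots> \<le> m + \<bar>a - a'\<bar> * K + \<bar>s - s'\<bar> * T"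
      using that assms by (intro add_mono mult_left_mono) auto
    finally show ?thesis
      using assms by linarith
  qed
  then have "{x. \<bar>a * z + s * x\<bar> \<le> m} \<subseteq> {x. \<bar>a' * z + s' * x\<bar> \<le> m + d} \<union> {x. T < \<bar>x\<bar>}"
    by force
  then have "measure std_normal {x. \<bar>a * z + s * x\<bar> \<le> m}
      \<le> measure std_normal ({x. \<bar>a' * z + s' * x\<bar> \<le> m + d} \<union> {x. T < \<bar>x\<bar>})"
    by (intro std_normal.finite_measure_mono) auto
  also have "\<dots> \<le> measure std_normal {x. \<bar>a' * z + s' * x\<bar> \<le> m + d} + measure std_normal {x. T < \<bar>x\<bar>}"
    by (rule measure_Un_le) auto
  finally show ?thesis .
qed

lemma max_abs_cdf_perturb_le:
  assumes "0 \<le> K" "0 \<le> T" "\<bar>a - a'\<bar> * K + \<bar>s - s'\<bar> * T \<le> d"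
  shows "max_abs_cdf n a s m
    \<le> max_abs_cdf n a' s' (m + d) + real n * measure std_normal {x. T < \<bar>x\<bar>}
       + measure std_normal {x. K < \<bar>x\<bar>}"
proof -
  define F where "F b c l z = (measure std_normal {x. \<bar>b * z + c * x\<bar> \<le> l}) ^ n" for b c l z
  define tail where "tail T = measure std_normal {x. T < \<bar>x\<bar>}" for T
  have [measurable]: "F b c l \<in> borel_measurable borel" for b c l
    unfolding F_def by (intro borel_measurable_power borel_measurable_measure_std_normal) measurable
  have F_bounded: "0 \<le> F b c l z" "F b c l z \<le> 1" for b c l z
    by (simp_all add: F_def power_le_one)
  have "{z. K < \<bar>z\<bar>} \<in> sets borel"
    by (intro borel_open open_Collect_less continuous_intros)
  then have [measurable]: "indicator {z. K < \<bar>z\<bar>} \<in> borel_measurable borel"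
    by simp
  have pointwise: "F a s m z \<le> F a' s' (m + d) z + real n * tail T + indicator {z. K < \<bar>z\<bar>} z" for z
  proof (cases "\<bar>z\<bar> \<le> K")
    case True
    then have "F a s m z \<le> F a' s' (m + d) z + real n * tail T"
      unfolding F_def tail_def
      using measure_std_normal_perturb_le[OF True assms(2,3)]
      by (intro power_le_add_mult) auto
    with True show ?thesis
      by (simp add: indicator_def)
  next
    case False
    have "0 \<le> real n * tail T"
      by (simp add: tail_def)
    with False show ?thesis
      using F_bounded[of a s m z] F_bounded[of a' s' "m + d" z] by simp
  qed
  have "max_abs_cdf n a s m \<le> (\<integral>z. F a' s' (m + d) z + real n * tail T + indicator {z. K < \<bar>z\<bar>} z \<partial>std_normal)"
    unfolding max_abs_cdf_def F_def[symmetric] using pointwise F_bounded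
    by (intro integral_mono Bochner_Integration.integrable_add std_normal.integrable_const
        integrable_std_normal_bounded[where B = 1])
       (auto simp: abs_le_iff indicator_def)
  also have "\<dots> = max_abs_cdf n a' s' (m + d) + real n * tail T + tail K"
    using F_bounded
    by (simp add: max_abs_cdf_def F_def[symmetric] tail_def integrable_std_normal_bounded[where B = 1]
        std_normal.prob_space[unfolded space_std_normal])
  finally show ?thesis
    by (simp add: tail_def)
qed

lemma mix_integral_diff_le:
  assumes "0 < \<rho>" "\<rho> < 1" "0 \<le> r" "r < 1" "0 \<le> K" "0 \<le> T"
  shows "\<bar>mix_integral n r m - mix_integral n \<rho> m\<bar>
    \<le> (\<bar>sqrt r - sqrt \<rho>\<bar> * K + \<bar>sqrt (1 - r) - sqrt (1 - \<rho>)\<bar> * T) / sqrt \<rho>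
       + real n * measure std_normal {x. T < \<bar>x\<bar>} + measure std_normal {x. K < \<bar>x\<bar>}"
proof -
  define d where "d = \<bar>sqrt r - sqrt \<rho>\<bar> * K + \<bar>sqrt (1 - r) - sqrt (1 - \<rho>)\<bar> * T"
  define E where "E = real n * measure std_normal {x. T < \<bar>x\<bar>} + measure std_normal {x. K < \<bar>x\<bar>}"
  let ?F = "max_abs_cdf n (sqrt r) (sqrt (1 - r))" and ?F\<rho> = "max_abs_cdf n (sqrt \<rho>) (sqrt (1 - \<rho>))"
  have "0 \<le> d" "0 < sqrt \<rho>"
    using assms by (simp_all add: d_def)
  have "?F m \<le> ?F\<rho> (m + d) + E"
    using max_abs_cdf_perturb_le[OF assms(5,6), of "sqrt r" "sqrt \<rho>" "sqrt (1 - r)" "sqrt (1 - \<rho>)" d n m]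
    by (simp add: d_def E_def add.assoc)
  moreover have "?F\<rho> (m + d) \<le> ?F\<rho> m + d / sqrt \<rho>"
    using \<open>0 \<le> d\<close> \<open>0 < sqrt \<rho>\<close> by (rule max_abs_cdf_increment_le[rotated])
  moreover have "?F\<rho> (m - d) \<le> ?F (m - d + d) + E"
    using max_abs_cdf_perturb_le[OF assms(5,6), of "sqrt \<rho>" "sqrt r" "sqrt (1 - \<rho>)" "sqrt (1 - r)" d n "m - d"]
    by (simp add: d_def E_def add.assoc abs_minus_commute)
  moreover have "?F\<rho> (m - d + d) \<le> ?F\<rho> (m - d) + d / sqrt \<rho>"
    using \<open>0 \<le> d\<close> \<open>0 < sqrt \<rho>\<close> by (rule max_abs_cdf_increment_le[rotated])
  ultimately have "\<bar>?F m - ?F\<rho> m\<bar> \<le> d / sqrt \<rho> + E"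
    by (simp add: abs_le_iff)
  with assms show ?thesis
    by (simp add: mix_integral_eq_max_abs_cdf d_def E_def add.assoc)
qed

lemma mix_integral_diff_le_sqrt_log:
  assumes "0 < \<rho>" "\<rho> < 1" "0 \<le> r" "r < 1" "0 \<le> K" "2 \<le> n"
  shows "\<bar>mix_integral n r m - mix_integral n \<rho> m\<bar>
    \<le> 2 * (sqrt (2 * ln (real n)) * \<bar>sqrt (1 - r) - sqrt (1 - \<rho>)\<bar>) * (K + sqrt \<rho>) / \<rho>
       + 2 / real n + measure std_normal {x. K < \<bar>x\<bar>}"
proof -
  define L where "L = sqrt (2 * ln (real n))"
  define \<delta> where "\<delta> = \<bar>sqrt (1 - r) - sqrt (1 - \<rho>)\<bar>"
  have "ln 2 \<le> ln (real n)"
    using assms by simp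
  with ln2_ge_two_thirds have "1 \<le> L"
    by (simp add: L_def)
  have "0 < sqrt \<rho>"
    using assms by simp
  have "\<bar>sqrt r - sqrt \<rho>\<bar> \<le> 2 * \<delta> / sqrt \<rho>"
    unfolding \<delta>_def using assms by (intro sqrt_diff_le_sqrt_one_minus_diff) auto
  also have "\<dots> \<le> 2 * (L * \<delta>) / sqrt \<rho>"
    using \<open>1 \<le> L\<close> \<open>0 < sqrt \<rho>\<close> mult_right_mono[OF \<open>1 \<le> L\<close>, of \<delta>]
    by (intro divide_right_mono) (auto simp: \<delta>_def)
  finally have "(\<bar>sqrt r - sqrt \<rho>\<bar> * K + \<delta> * (2 * L)) / sqrt \<rho>
      \<le> (2 * (L * \<delta>) / sqrt \<rho> * K + 2 * (L * \<delta>)) / sqrt \<rho>"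
    using \<open>0 \<le> K\<close> \<open>0 < sqrt \<rho>\<close> by (intro divide_right_mono add_mono mult_right_mono) auto
  also have "\<dots> = 2 * (L * \<delta>) * (K + sqrt \<rho>) / \<rho>"
    using \<open>0 < sqrt \<rho>\<close> assms by (simp add: field_simps)
  finally have "(\<bar>sqrt r - sqrt \<rho>\<bar> * K + \<delta> * (2 * L)) / sqrt \<rho> \<le> 2 * (L * \<delta>) * (K + sqrt \<rho>) / \<rho>" .
  moreover have "real n * measure std_normal {x. 2 * L < \<bar>x\<bar>} \<le> 2 / real n"
    using assms by (simp add: L_def std_normal_tail_sqrt_log_le)
  moreover have "\<bar>mix_integral n r m - mix_integral n \<rho> m\<bar>
      \<le> (\<bar>sqrt r - sqrt \<rho>\<bar> * K + \<delta> * (2 * L)) / sqrt \<rho>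
         + real n * measure std_normal {x. 2 * L < \<bar>x\<bar>} + measure std_normal {x. K < \<bar>x\<bar>}"
    unfolding \<delta>_def using assms \<open>1 \<le> L\<close> by (intro mix_integral_diff_le) auto
  ultimately show ?thesis
    unfolding L_def[symmetric] \<delta>_def[symmetric] by linarith
qed

lemma mix_integral_uniformly_close:
  assumes "0 < \<rho>" "\<rho> < 1" "0 < \<eta>"
  shows "\<exists>\<epsilon>>0. \<forall>\<^sub>F n in sequentially. \<forall>r m. 0 \<le> r \<longrightarrow> r < 1 \<longrightarrow>
           \<bar>sqrt (2 * ln (real n)) * (sqrt (1 - \<rho>) - sqrt (1 - r))\<bar> \<le> \<epsilon> \<longrightarrow>
           \<bar>mix_integral n \<rho> m - mix_integral n r m\<bar> \<le> \<eta>"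
proof -
  define K where "K = 4 / sqrt \<eta>"
  define \<epsilon> where "\<epsilon> = \<eta> * \<rho> / (8 * (K + sqrt \<rho>))"
  have "0 \<le> K" "0 < sqrt \<rho>"
    using assms by (simp_all add: K_def)
  then have "0 < K + sqrt \<rho>"
    by linarith
  with assms have "0 < \<epsilon>"
    by (simp add: \<epsilon>_def)
  have "\<epsilon> * (K + sqrt \<rho>) = \<eta> * \<rho> / 8"
    using \<open>0 < K + sqrt \<rho>\<close> unfolding \<epsilon>_def by (simp del: distrib_left_numeral)
  obtain N :: nat where N: "8 / \<eta> \<le> real N"
    using real_arch_simple by blast
  have "\<bar>mix_integral n \<rho> m - mix_integral n r m\<bar> \<le> \<eta>"
    if n: "max 2 N \<le> n" and r: "0 \<le> r" "r < 1"
      and small: "\<bar>sqrt (2 * ln (real n)) * (sqrt (1 - \<rho>) - sqrt (1 - r))\<bar> \<le> \<epsilon>" for n r m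
  proof -
    have "sqrt (2 * ln (real n)) * \<bar>sqrt (1 - r) - sqrt (1 - \<rho>)\<bar> \<le> \<epsilon>"
      using small n by (simp add: abs_mult abs_minus_commute)
    with \<open>0 < K + sqrt \<rho>\<close> assms
    have "2 * (sqrt (2 * ln (real n)) * \<bar>sqrt (1 - r) - sqrt (1 - \<rho>)\<bar>) * (K + sqrt \<rho>) / \<rho>
        \<le> 2 * \<epsilon> * (K + sqrt \<rho>) / \<rho>"
      by (intro divide_right_mono mult_right_mono) auto
    also have "\<dots> = 2 * (\<eta> * \<rho> / 8) / \<rho>"
      by (simp only: mult.assoc \<open>\<epsilon> * (K + sqrt \<rho>) = \<eta> * \<rho> / 8\<close>)
    also have "\<dots> = \<eta> / 4"
      using assms by simp
    finally have "2 * (sqrt (2 * ln (real n)) * \<bar>sqrt (1 - r) - sqrt (1 - \<rho>)\<bar>) * (K + sqrt \<rho>) / \<rho>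
        \<le> \<eta> / 4" .
    moreover have "2 / real n \<le> \<eta> / 4"
      using n N assms divide_left_mono[of "8 / \<eta>" "real n" 2] by simp
    moreover have "measure std_normal {x. K < \<bar>x\<bar>} \<le> \<eta> / 4"
      unfolding K_def using \<open>0 < \<eta>\<close> by (rule std_normal_tail_le_quarter)
    ultimately show ?thesis
      using mix_integral_diff_le_sqrt_log[of \<rho> r K n m] assms r n \<open>0 \<le> K\<close>
      by (simp add: abs_minus_commute)
  qed
  with \<open>0 < \<epsilon>\<close> show ?thesis
    unfolding eventually_sequentially by (intro exI[of _ \<epsilon>] conjI exI[of _ "max 2 N"]) auto
qed

section \<open>Convergence in probability\<close>

lemma (in prob_space) conv_in_prob_zero_transfer:
  assumes "conv_in_prob_zero M Y" and [measurable]: "\<And>n. Y n \<in> borel_measurable M"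
    and control: "\<And>\<eta>. 0 < \<eta> \<Longrightarrow> \<exists>\<epsilon>>0. \<forall>\<^sub>F n in sequentially. \<forall>\<omega>\<in>space M.
                     \<bar>Y n \<omega>\<bar> \<le> \<epsilon> \<longrightarrow> \<bar>D n \<omega>\<bar> \<le> \<eta>"
  shows "conv_in_prob_zero M D"
  unfolding conv_in_prob_zero_def
proof (intro allI impI)
  fix e :: real
  assume "0 < e"
  then obtain \<epsilon> where "0 < \<epsilon>"
    and ev: "\<forall>\<^sub>F n in sequentially. \<forall>\<omega>\<in>space M. \<bar>Y n \<omega>\<bar> \<le> \<epsilon> \<longrightarrow> \<bar>D n \<omega>\<bar> \<le> e"
    using control by blast
  have prob_le: "prob {\<omega> \<in> space M. \<bar>D n \<omega>\<bar> > e} \<le> prob {\<omega> \<in> space M. \<bar>Y n \<omega>\<bar> > \<epsilon>}"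
    if "\<forall>\<omega>\<in>space M. \<bar>Y n \<omega>\<bar> \<le> \<epsilon> \<longrightarrow> \<bar>D n \<omega>\<bar> \<le> e" for n
  proof (rule finite_measure_mono)
    show "{\<omega> \<in> space M. \<bar>D n \<omega>\<bar> > e} \<subseteq> {\<omega> \<in> space M. \<bar>Y n \<omega>\<bar> > \<epsilon>}"
      using that by (auto simp flip: not_le)
  qed measurable
  have eventually_le: "\<forall>\<^sub>F n in sequentially.
      prob {\<omega> \<in> space M. \<bar>D n \<omega>\<bar> > e} \<le> prob {\<omega> \<in> space M. \<bar>Y n \<omega>\<bar> > \<epsilon>}"
    using ev prob_le by (rule eventually_mono)
  have Y_small: "(\<lambda>n. prob {\<omega> \<in> space M. \<bar>Y n \<omega>\<bar> > \<epsilon>}) \<longlonglongrightarrow> 0"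
    using assms(1) \<open>0 < \<epsilon>\<close> unfolding conv_in_prob_zero_def by blast
  show "(\<lambda>n. prob {\<omega> \<in> space M. \<bar>D n \<omega>\<bar> > e}) \<longlonglongrightarrow> 0"
    by (rule tendsto_sandwich[OF _ eventually_le tendsto_const Y_small]) simp
qed

lemma (in prob_space) conv_in_prob_zero_mix_integral_diff:
  fixes r m :: "nat \<Rightarrow> 'a \<Rightarrow> real"
  assumes "0 < \<rho>" "\<rho> < 1" and [measurable]: "\<And>n. r n \<in> borel_measurable M"
    and r: "\<And>n \<omega>. \<omega> \<in> space M \<Longrightarrow> r n \<omega> \<in> {0..<1}"
    and "conv_in_prob_zero M (\<lambda>n \<omega>. sqrt (2 * ln (real n)) * (sqrt (1 - \<rho>) - sqrt (1 - r n \<omega>)))"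
  shows "conv_in_prob_zero M (\<lambda>n \<omega>. \<bar>mix_integral n \<rho> (m n \<omega>) - mix_integral n (r n \<omega>) (m n \<omega>)\<bar>)"
proof (rule conv_in_prob_zero_transfer)
  show "conv_in_prob_zero M (\<lambda>n \<omega>. sqrt (2 * ln (real n)) * (sqrt (1 - \<rho>) - sqrt (1 - r n \<omega>)))"
    by fact
  show "(\<lambda>\<omega>. sqrt (2 * ln (real n)) * (sqrt (1 - \<rho>) - sqrt (1 - r n \<omega>))) \<in> borel_measurable M" for n
    by measurable
  fix \<eta> :: real
  assume "0 < \<eta>"
  then obtain \<epsilon> where "0 < \<epsilon>" and close: "\<forall>\<^sub>F n in sequentially. \<forall>r m. 0 \<le> r \<longrightarrow> r < 1 \<longrightarrow>
      \<bar>sqrt (2 * ln (real n)) * (sqrt (1 - \<rho>) - sqrt (1 - r))\<bar> \<le> \<epsilon> \<longrightarrow>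
      \<bar>mix_integral n \<rho> m - mix_integral n r m\<bar> \<le> \<eta>"
    using mix_integral_uniformly_close[OF assms(1,2)] by blast
  have "\<forall>\<^sub>F n in sequentially. \<forall>\<omega>\<in>space M.
      \<bar>sqrt (2 * ln (real n)) * (sqrt (1 - \<rho>) - sqrt (1 - r n \<omega>))\<bar> \<le> \<epsilon> \<longrightarrow>
      \<bar>\<bar>mix_integral n \<rho> (m n \<omega>) - mix_integral n (r n \<omega>) (m n \<omega>)\<bar>\<bar> \<le> \<eta>"
    using close by (rule eventually_mono) (use r in auto)
  with \<open>0 < \<epsilon>\<close> show "\<exists>\<epsilon>>0. \<forall>\<^sub>F n in sequentially. \<forall>\<omega>\<in>space M.
      \<bar>sqrt (2 * ln (real n)) * (sqrt (1 - \<rho>) - sqrt (1 - r n \<omega>))\<bar> \<le> \<epsilon> \<longrightarrow>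
      \<bar>\<bar>mix_integral n \<rho> (m n \<omega>) - mix_integral n (r n \<omega>) (m n \<omega>)\<bar>\<bar> \<le> \<eta>"
    by blast
qed

lemma borel_measurable_equicorr_gaussian_statistic:
  assumes "equicorr_gaussian M n \<rho> X" and "g \<in> borel_measurable (PiM {1..n} (\<lambda>_. borel))"
  shows "(\<lambda>\<omega>. g (restrict (X \<omega>) {1..n})) \<in> borel_measurable M"
proof -
  have "(\<lambda>\<omega>. restrict (X \<omega>) {1..n}) \<in> M \<rightarrow>\<^sub>M PiM {1..n} (\<lambda>_. borel)"
    using assms(1) unfolding equicorr_gaussian_def by (intro measurable_restrict) auto
  from measurable_compose[OF this assms(2)] show ?thesis .
qed

theorem theorem2:
  fixes M :: "'a measure"
    and rho :: real
    and X :: "nat \<Rightarrow> 'a \<Rightarrow> nat \<Rightarrow> real"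
    and g :: "nat \<Rightarrow> (nat \<Rightarrow> real) \<Rightarrow> real"
  assumes "prob_space M"
    and "0 < rho" and "rho < 1"
    and "\<And>n. equicorr_gaussian M n rho (X n)"
    and "\<And>n. g n \<in> borel_measurable (PiM {1..n} (\<lambda>_. borel))"
    and "\<And>n \<omega>. \<omega> \<in> space M \<Longrightarrow> g n (restrict (X n \<omega>) {1..n}) \<in> {0..<1}"
    and "conv_in_prob_zero M (\<lambda>n \<omega>. sqrt (2 * ln (real n)) *
           (sqrt (1 - rho) - sqrt (1 - g n (restrict (X n \<omega>) {1..n}))))"
  shows "conv_in_prob_zero M (\<lambda>n \<omega>.
           \<bar>mix_integral n rho (max_abs n (X n \<omega>))
            - mix_integral n (g n (restrict (X n \<omega>) {1..n})) (max_abs n (X n \<omega>))\<bar>)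
       \<and> conv_in_prob_zero M (\<lambda>n \<omega>.
           p0 n rho (max_abs n (X n \<omega>))
            - p0 n (g n (restrict (X n \<omega>) {1..n})) (max_abs n (X n \<omega>)))"
proof -
  interpret M: prob_space M
    by fact
  define r where "r = (\<lambda>n \<omega>. g n (restrict (X n \<omega>) {1..n}))"
  have "conv_in_prob_zero M (\<lambda>n \<omega>. \<bar>mix_integral n rho (max_abs n (X n \<omega>))
      - mix_integral n (r n \<omega>) (max_abs n (X n \<omega>))\<bar>)"
    using assms(2,3,6,7) borel_measurable_equicorr_gaussian_statistic[OF assms(4,5)]
    by (intro M.conv_in_prob_zero_mix_integral_diff) (simp_all add: r_def)
  moreover have "\<bar>p0 n rho x - p0 n r' x\<bar> = \<bar>mix_integral n rho x - mix_integral n r' x\<bar>" for n x r'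
    by (simp add: p0_def abs_minus_commute)
  ultimately show ?thesis
    by (simp add: conv_in_prob_zero_def r_def)
qed

end
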